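(* If $Y^*\in\mathcal L^1(\mathcal Q)$, then $$\sup_{\tau\in\mathcal T}\inf_{\mathrm Q\in\overline{\mathcal Q}}\mathbb E_{\mathrm Q}[Y_\tau]=\sup_{\tau\in\mathcal T}\inf_{\mathrm Q\in\mathcal Q}\mathbb E_{\mathrm Q}[Y_\tau]=\sup_{\tau\in\mathcal T}\inf_{\mathrm Q\in co(\mathcal Q)}\mathbb E_{\mathrm Q}[Y_\tau].$$
   Context: Let $(\Omega,\mathcal F,(\mathcal F_t)_{0\le t\le T},\mathrm P)$ be a filtered probability space ($0<T<\infty$) with right-continuous filtration, $\mathcal F=\mathcal F_T$, $\mathcal F_0$ trivial and containing all $\mathrm P$-null sets. $\mathcal T$ is the set of stopping times $\tau\le T$. $\mathcal Q$ is a nonempty set of probability measures on $\mathcal F$, each absolutely continuous w.r.t. $\mathrm P$, $co(\mathcal Q)$ its convex hull. $\mathcal L^1(\mathcal Q)$ is the set of random variables $X$ with $\sup_{\mathrm Q\in\mathcal Q}\mathbb E_{\mathrm Q}[|X|]<\infty$. $Y=(Y_t)_{0\le t\le T}$ is a right-continuous adapted process with bounded paths, quasi left-uppersemicontinuous w.r.t. $\mathrm P$, and $Y^*:=\sup_{t\in[0,T]}|Y_t|$. $\mathcal X$ is the set of random variables $X$ with $|X|\le C(Y^*+1)$ $\mathrm P$-a.s. for some $C>0$; $\rho_{\mathcal Q}(X)=\sup_{\mathrm Q\in\mathcal Q}\mathbb E_{\mathrm Q}[X]$ for $X\in\mathcal X$. $\overline{\mathcal Q}$ is the set of probability measures $\mathrm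 Q$ on $\mathcal F$ such that every $X\in\mathcal X$ is $\mathrm Q$-integrable and $\mathbb E_{\mathrm Q}[X]\le\rho_{\mathcal Q}(X)$ for all $X\in\mathcal X$. *)

theory Defs
  imports "HOL-Probability.Probability"
begin

definition filtered_prob_space :: "'a measure \<Rightarrow> (real \<Rightarrow> 'a measure) \<Rightarrow> real \<Rightarrow> bool" where
  "filtered_prob_space P F T \<longleftrightarrow>
     prob_space P \<and> 0 < T \<and>
     (\<forall>t\<in>{0..T}. space (F t) = space P \<and> sets (F t) \<subseteq> sets P) \<and>
     (\<forall>s t. 0 \<le> s \<and> s \<le> t \<and> t \<le> T \<longrightarrow> sets (F s) \<subseteq> sets (F t)) \<and>
     sets (F T) = sets P \<and>
     (\<forall>t\<in>{0..<T}. sets (F t) = (\<Inter>s\<in>{t<..T}. sets (F s))) \<and>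
     (\<forall>A\<in>sets (F 0). emeasure P A = 0 \<or> emeasure P A = 1) \<and>
     (\<forall>N\<in>null_sets P. \<forall>A. A \<subseteq> N \<longrightarrow> A \<in> sets (F 0))"

definition stopping_times :: "'a measure \<Rightarrow> (real \<Rightarrow> 'a measure) \<Rightarrow> real \<Rightarrow> ('a \<Rightarrow> real) set" where
  "stopping_times P F T =
     {\<tau>. (\<forall>\<omega>\<in>space P. 0 \<le> \<tau> \<omega> \<and> \<tau> \<omega> \<le> T) \<and>
          (\<forall>t\<in>{0..T}. {\<omega>\<in>space P. \<tau> \<omega> \<le> t} \<in> sets (F t))}"

definition conv_measures :: "'a measure \<Rightarrow> 'a measure set \<Rightarrow> 'a measure set" where
  "conv_measures M \<Q> =
     {Q. sets Q = sets M \<and>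
         (\<exists>(n::nat) (c::nat \<Rightarrow> real) Qs. (\<forall>i<n. Qs i \<in> \<Q> \<and> 0 \<le> c i) \<and> (\<Sum>i<n. c i) = 1 \<and>
            (\<forall>A\<in>sets M. emeasure Q A = (\<Sum>i<n. ennreal (c i) * emeasure (Qs i) A)))}"

definition L1_set :: "'a measure \<Rightarrow> 'a measure set \<Rightarrow> ('a \<Rightarrow> real) set" where
  "L1_set M \<Q> = {X. X \<in> borel_measurable M \<and> (SUP Q\<in>\<Q>. \<integral>\<^sup>+ \<omega>. ennreal \<bar>X \<omega>\<bar> \<partial>Q) < \<infinity>}"

definition Ystar :: "(real \<Rightarrow> 'a \<Rightarrow> real) \<Rightarrow> real \<Rightarrow> 'a \<Rightarrow> real" where
  "Ystar Y T \<omega> = (SUP t\<in>{0..T}. \<bar>Y t \<omega>\<bar>)"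

definition quasi_left_usc :: "'a measure \<Rightarrow> (real \<Rightarrow> 'a measure) \<Rightarrow> real \<Rightarrow> (real \<Rightarrow> 'a \<Rightarrow> real) \<Rightarrow> bool" where
  "quasi_left_usc P F T Y \<longleftrightarrow>
     (\<forall>\<tau>s \<tau>. (\<forall>n. \<tau>s n \<in> stopping_times P F T) \<longrightarrow> \<tau> \<in> stopping_times P F T \<longrightarrow>
        (\<forall>\<omega>\<in>space P. incseq (\<lambda>n. \<tau>s n \<omega>) \<and> (\<lambda>n. \<tau>s n \<omega>) \<longlonglongrightarrow> \<tau> \<omega>) \<longrightarrow>
        (AE \<omega> in P. limsup (\<lambda>n. ereal (Y (\<tau>s n \<omega>) \<omega>)) \<le> ereal (Y (\<tau> \<omega>) \<omega>)))"

definition dom_class :: "'a measure \<Rightarrow> (real \<Rightarrow> 'a \<Rightarrow> real) \<Rightarrow> real \<Rightarrow> ('a \<Rightarrow> real) set" where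
  "dom_class P Y T = {X. X \<in> borel_measurable P \<and>
      (\<exists>C>0. AE \<omega> in P. \<bar>X \<omega>\<bar> \<le> C * (Ystar Y T \<omega> + 1))}"

definition rho :: "'a measure set \<Rightarrow> ('a \<Rightarrow> real) \<Rightarrow> ereal" where
  "rho \<Q> X = (SUP Q\<in>\<Q>. ereal (\<integral>\<omega>. X \<omega> \<partial>Q))"

definition Qbar :: "'a measure \<Rightarrow> 'a measure set \<Rightarrow> (real \<Rightarrow> 'a \<Rightarrow> real) \<Rightarrow> real \<Rightarrow> 'a measure set" where
  "Qbar P \<Q> Y T = {Q. prob_space Q \<and> sets Q = sets P \<and>
      (\<forall>X\<in>dom_class P Y T. integrable Q X \<and> ereal (\<integral>\<omega>. X \<omega> \<partial>Q) \<le> rho \<Q> X)}"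

end

theory Submission imports Defs begin

text \<open>Every \<open>Q \<in> \<Q>\<close> lies in both \<open>Qbar\<close> and the convex hull, so only the reverse inequalities
  between the inner infima need an argument. For \<open>Qbar\<close> it is the defining bound
  \<open>E\<^sub>Q[-Y\<^sub>\<tau>] \<le> \<rho>(-Y\<^sub>\<tau>) = - inf\<^sub>\<Q> E[Y\<^sub>\<tau>]\<close>, applicable because \<open>|Y\<^sub>\<tau>| \<le> Y*\<close>. For a convex
  combination of elements of \<open>\<Q>\<close> the expectation is the same convex combination of expectations,
  each of which is at least the infimum over \<open>\<Q>\<close>.\<close>

context
  fixes Q :: "'a measure" and n :: nat and c :: "nat \<Rightarrow> real" and Qs :: "nat \<Rightarrow> 'a measure"
  assumes sets_Qs: "\<And>i. i < n \<Longrightarrow> sets (Qs i) = sets Q"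
    and emeasure_mixture: "\<And>A. A \<in> sets Q \<Longrightarrow> emeasure Q A = (\<Sum>i<n. ennreal (c i) * emeasure (Qs i) A)"
begin

lemma borel_measurable_mixture_component:
  "f \<in> borel_measurable Q \<Longrightarrow> i < n \<Longrightarrow> f \<in> borel_measurable (Qs i)"
  using measurable_cong_sets[OF sets_Qs refl] by blast

lemma nn_integral_mixture:
  fixes f :: "'a \<Rightarrow> ennreal"
  assumes "f \<in> borel_measurable Q"
  shows "(\<integral>\<^sup>+x. f x \<partial>Q) = (\<Sum>i<n. ennreal (c i) * (\<integral>\<^sup>+x. f x \<partial>Qs i))"
  using assms
proof (induct rule: borel_measurable_induct)
  case (cong f g)
  have "\<And>i. i < n \<Longrightarrow> (\<integral>\<^sup>+x. f x \<partial>Qs i) = (\<integral>\<^sup>+x. g x \<partial>Qs i)"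
    by (intro nn_integral_cong) (simp add: sets_eq_imp_space_eq[OF sets_Qs] cong)
  with cong show ?case by (simp cong: nn_integral_cong)
next
  case (set A)
  then show ?case by (simp add: nn_integral_indicator sets_Qs emeasure_mixture)
next
  case (mult u a)
  have "(\<integral>\<^sup>+x. a * u x \<partial>Q) = a * (\<integral>\<^sup>+x. u x \<partial>Q)" using mult by (simp add: nn_integral_cmult)
  also have "\<dots> = (\<Sum>i<n. ennreal (c i) * (a * (\<integral>\<^sup>+x. u x \<partial>Qs i)))"
    using mult by (simp add: sum_distrib_left mult.left_commute)
  also have "\<dots> = (\<Sum>i<n. ennreal (c i) * (\<integral>\<^sup>+x. a * u x \<partial>Qs i))"
    using mult by (intro sum.cong refl) (simp add: nn_integral_cmult borel_measurable_mixture_component)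
  finally show ?case .
next
  case (add u v)
  have "(\<integral>\<^sup>+x. v x + u x \<partial>Q) = (\<integral>\<^sup>+x. v x \<partial>Q) + (\<integral>\<^sup>+x. u x \<partial>Q)"
    using add by (simp add: nn_integral_add)
  also have "\<dots> = (\<Sum>i<n. ennreal (c i) * ((\<integral>\<^sup>+x. v x \<partial>Qs i) + (\<integral>\<^sup>+x. u x \<partial>Qs i)))"
    using add by (simp add: sum.distrib distrib_left)
  also have "\<dots> = (\<Sum>i<n. ennreal (c i) * (\<integral>\<^sup>+x. v x + u x \<partial>Qs i))"
    using add by (intro sum.cong refl) (simp add: nn_integral_add borel_measurable_mixture_component)
  finally show ?case .
next
  case (seq U)
  have "(\<integral>\<^sup>+x. (SUP j. U j) x \<partial>Q) = (SUP j. \<integral>\<^sup>+x. U j x \<partial>Q)"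
    using nn_integral_monotone_convergence_SUP[OF seq(4)] seq by (simp add: image_comp)
  also have "\<dots> = (SUP j. \<Sum>i<n. ennreal (c i) * (\<integral>\<^sup>+x. U j x \<partial>Qs i))" using seq by simp
  also have "\<dots> = (\<Sum>i<n. SUP j. ennreal (c i) * (\<integral>\<^sup>+x. U j x \<partial>Qs i))"
    using seq(4) by (intro ennreal_SUP_sum)
      (auto intro!: mult_left_mono nn_integral_mono simp: incseq_def le_fun_def)
  also have "\<dots> = (\<Sum>i<n. ennreal (c i) * (SUP j. \<integral>\<^sup>+x. U j x \<partial>Qs i))"
    by (simp add: SUP_mult_left_ennreal)
  also have "\<dots> = (\<Sum>i<n. ennreal (c i) * (\<integral>\<^sup>+x. (SUP j. U j) x \<partial>Qs i))"
    using seq by (intro sum.cong refl) (simp add: nn_integral_monotone_convergence_SUP[OF seq(4)]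
        borel_measurable_mixture_component image_comp)
  finally show ?case .
qed

context
  assumes weights_nonneg: "\<And>i. i < n \<Longrightarrow> 0 \<le> c i"
begin

lemma
  fixes f :: "'a \<Rightarrow> real"
  assumes f: "f \<in> borel_measurable Q" and f_nonneg: "\<And>x. 0 \<le> f x"
    and integrable_Qs: "\<And>i. i < n \<Longrightarrow> integrable (Qs i) f"
  shows integrable_mixture_nonneg: "integrable Q f"
    and integral_mixture_nonneg: "integral\<^sup>L Q f = (\<Sum>i<n. c i * integral\<^sup>L (Qs i) f)"
proof -
  have "(\<integral>\<^sup>+x. ennreal (f x) \<partial>Q) = (\<Sum>i<n. ennreal (c i) * (\<integral>\<^sup>+x. ennreal (f x) \<partial>Qs i))"
    using f by (intro nn_integral_mixture) auto
  also have "\<dots> = (\<Sum>i<n. ennreal (c i * integral\<^sup>L (Qs i) f))"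
    by (intro sum.cong refl)
      (simp add: nn_integral_eq_integral integrable_Qs f_nonneg weights_nonneg ennreal_mult)
  also have "\<dots> = ennreal (\<Sum>i<n. c i * integral\<^sup>L (Qs i) f)"
    by (rule sum_ennreal) (simp add: weights_nonneg f_nonneg)
  finally have nn: "(\<integral>\<^sup>+x. ennreal (f x) \<partial>Q) = ennreal (\<Sum>i<n. c i * integral\<^sup>L (Qs i) f)" .
  show integrable: "integrable Q f"
    using f nn by (intro integrableI_nn_integral_finite) (simp_all add: f_nonneg)
  have "0 \<le> (\<Sum>i<n. c i * integral\<^sup>L (Qs i) f)"
    by (intro sum_nonneg mult_nonneg_nonneg) (simp_all add: weights_nonneg f_nonneg)
  then show "integral\<^sup>L Q f = (\<Sum>i<n. c i * integral\<^sup>L (Qs i) f)"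
    using nn nn_integral_eq_integral[OF integrable] by (simp add: f_nonneg)
qed

lemma integral_mixture:
  fixes f :: "'a \<Rightarrow> real"
  assumes f: "f \<in> borel_measurable Q" and integrable_Qs: "\<And>i. i < n \<Longrightarrow> integrable (Qs i) f"
  shows "integral\<^sup>L Q f = (\<Sum>i<n. c i * integral\<^sup>L (Qs i) f)"
proof -
  define p where "p x = max 0 (f x)" for x
  define q where "q x = max 0 (- f x)" for x
  have f_eq: "f = (\<lambda>x. p x - q x)" by (auto simp: p_def q_def)
  have integrable_pq: "integrable (Qs i) p" "integrable (Qs i) q" if "i < n" for i
    using integrable_Qs[OF that] unfolding p_def q_def by auto
  have p_meas: "p \<in> borel_measurable Q" using f unfolding p_def by simp
  have q_meas: "q \<in> borel_measurable Q" using f unfolding q_def by simp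
  have pos: "0 \<le> p x" "0 \<le> q x" for x by (auto simp: p_def q_def)
  note p_mix = integrable_mixture_nonneg[OF p_meas pos(1) integrable_pq(1)]
    integral_mixture_nonneg[OF p_meas pos(1) integrable_pq(1)]
  note q_mix = integrable_mixture_nonneg[OF q_meas pos(2) integrable_pq(2)]
    integral_mixture_nonneg[OF q_meas pos(2) integrable_pq(2)]
  have "integral\<^sup>L Q f = integral\<^sup>L Q p - integral\<^sup>L Q q"
    using p_mix q_mix by (simp add: f_eq)
  also have "\<dots> = (\<Sum>i<n. c i * (integral\<^sup>L (Qs i) p - integral\<^sup>L (Qs i) q))"
    using p_mix q_mix by (simp add: sum_subtractf right_diff_distrib)
  also have "\<dots> = (\<Sum>i<n. c i * integral\<^sup>L (Qs i) f)"
    by (intro sum.cong refl) (simp add: f_eq integrable_pq)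
  finally show ?thesis .
qed

end

end

lemma INF_le_convex_combination:
  fixes f :: "'b \<Rightarrow> real" and c :: "nat \<Rightarrow> real"
  assumes x: "\<And>i. i < n \<Longrightarrow> x i \<in> A" and c: "\<And>i. i < n \<Longrightarrow> 0 \<le> c i" and c_sum: "(\<Sum>i<n. c i) = 1"
  shows "(INF a\<in>A. ereal (f a)) \<le> ereal (\<Sum>i<n. c i * f (x i))"
proof (cases "(INF a\<in>A. ereal (f a)) = -\<infinity>")
  case False
  have "n \<noteq> 0" using c_sum by (cases n) auto
  then have "(INF a\<in>A. ereal (f a)) \<le> ereal (f (x 0))" using x by (intro INF_lower) simp
  with False obtain r where r: "(INF a\<in>A. ereal (f a)) = ereal r" by (cases "INF a\<in>A. ereal (f a)") auto
  have r_le: "r \<le> f (x i)" if "i < n" for i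
    using INF_lower[OF x[OF that], of "\<lambda>a. ereal (f a)"] r by simp
  have "r = (\<Sum>i<n. c i * r)" using c_sum by (simp add: sum_distrib_right[symmetric])
  also have "\<dots> \<le> (\<Sum>i<n. c i * f (x i))"
    by (intro sum_mono mult_left_mono) (simp_all add: r_le c)
  finally show ?thesis using r by simp
qed simp

lemma subset_conv_measures:
  assumes "\<And>Q. Q \<in> \<Q> \<Longrightarrow> sets Q = sets M"
  shows "\<Q> \<subseteq> conv_measures M \<Q>"
  using assms unfolding conv_measures_def
  by (auto intro!: exI[of _ "1::nat"] exI[of _ "\<lambda>_. 1::real"])

lemma conv_measuresE:
  assumes "Q \<in> conv_measures M \<Q>"
  obtains n :: nat and c :: "nat \<Rightarrow> real" and Qs where "sets Q = sets M"
    and "\<And>i. i < n \<Longrightarrow> Qs i \<in> \<Q>" and "\<And>i. i < n \<Longrightarrow> 0 \<le> c i" and "(\<Sum>i<n. c i) = 1"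
    and "\<And>A. A \<in> sets M \<Longrightarrow> emeasure Q A = (\<Sum>i<n. ennreal (c i) * emeasure (Qs i) A)"
proof -
  from assms have "sets Q = sets M" and "\<exists>(n::nat) (c::nat \<Rightarrow> real) Qs. (\<forall>i<n. Qs i \<in> \<Q> \<and> 0 \<le> c i) \<and>
      (\<Sum>i<n. c i) = 1 \<and> (\<forall>A\<in>sets M. emeasure Q A = (\<Sum>i<n. ennreal (c i) * emeasure (Qs i) A))"
    by (simp_all add: conv_measures_def)
  then show thesis using that by blast
qed

lemma INF_conv_measures_integral:
  fixes X :: "'a \<Rightarrow> real"
  assumes sets_\<Q>: "\<And>Q. Q \<in> \<Q> \<Longrightarrow> sets Q = sets M"
    and X: "X \<in> borel_measurable M" and integrable_X: "\<And>Q. Q \<in> \<Q> \<Longrightarrow> integrable Q X"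
  shows "(INF Q\<in>conv_measures M \<Q>. ereal (\<integral>x. X x \<partial>Q)) = (INF Q\<in>\<Q>. ereal (\<integral>x. X x \<partial>Q))"
proof (rule antisym)
  show "(INF Q\<in>conv_measures M \<Q>. ereal (\<integral>x. X x \<partial>Q)) \<le> (INF Q\<in>\<Q>. ereal (\<integral>x. X x \<partial>Q))"
    by (intro INF_superset_mono subset_conv_measures sets_\<Q> order_refl)
  show "(INF Q\<in>\<Q>. ereal (\<integral>x. X x \<partial>Q)) \<le> (INF Q\<in>conv_measures M \<Q>. ereal (\<integral>x. X x \<partial>Q))"
  proof (rule INF_greatest)
    fix Q assume "Q \<in> conv_measures M \<Q>"
    then obtain n :: nat and Qs c where sets_Q: "sets Q = sets M"
      and Qs: "\<And>i. i < n \<Longrightarrow> Qs i \<in> \<Q>" and c: "\<And>i. i < n \<Longrightarrow> 0 \<le> c i"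
      and c_sum: "(\<Sum>i<n. c i) = 1"
      and mixture: "\<And>A. A \<in> sets M \<Longrightarrow> emeasure Q A = (\<Sum>i<n. ennreal (c i) * emeasure (Qs i) A)"
      by (elim conv_measuresE) blast
    have X_Q: "X \<in> borel_measurable Q" using X measurable_cong_sets[OF sets_Q refl] by blast
    have "(\<integral>x. X x \<partial>Q) = (\<Sum>i<n. c i * (\<integral>x. X x \<partial>Qs i))"
      using X_Q by (intro integral_mixture[of n Qs Q c])
        (simp_all add: sets_Q sets_\<Q> Qs mixture c integrable_X)
    then show "(INF Q\<in>\<Q>. ereal (\<integral>x. X x \<partial>Q)) \<le> ereal (\<integral>x. X x \<partial>Q)"
      using INF_le_convex_combination[OF Qs c c_sum] by simp
  qed
qed

lemma INF_Qbar_integral: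
  fixes X :: "'a \<Rightarrow> real"
  assumes subset: "\<Q> \<subseteq> Qbar P \<Q> Y T" and neg_X: "(\<lambda>x. - X x) \<in> dom_class P Y T"
  shows "(INF Q\<in>Qbar P \<Q> Y T. ereal (\<integral>x. X x \<partial>Q)) = (INF Q\<in>\<Q>. ereal (\<integral>x. X x \<partial>Q))"
proof (rule antisym)
  show "(INF Q\<in>Qbar P \<Q> Y T. ereal (\<integral>x. X x \<partial>Q)) \<le> (INF Q\<in>\<Q>. ereal (\<integral>x. X x \<partial>Q))"
    using subset by (rule INF_superset_mono) simp
  show "(INF Q\<in>\<Q>. ereal (\<integral>x. X x \<partial>Q)) \<le> (INF Q\<in>Qbar P \<Q> Y T. ereal (\<integral>x. X x \<partial>Q))"
  proof (rule INF_greatest)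
    fix Q assume "Q \<in> Qbar P \<Q> Y T"
    then have "- ereal (\<integral>x. X x \<partial>Q) \<le> rho \<Q> (\<lambda>x. - X x)"
      using neg_X by (auto simp: Qbar_def)
    also have "\<dots> = (SUP Q\<in>\<Q>. - ereal (\<integral>x. X x \<partial>Q))" by (simp add: rho_def)
    also have "\<dots> = - (INF Q\<in>\<Q>. ereal (\<integral>x. X x \<partial>Q))" by (rule ereal_SUP_uminus_eq)
    finally show "(INF Q\<in>\<Q>. ereal (\<integral>x. X x \<partial>Q)) \<le> ereal (\<integral>x. X x \<partial>Q)"
      by (simp only: ereal_minus_le_minus)
  qed
qed

lemma INF_integral_not_measurable:
  fixes X :: "'a \<Rightarrow> real"
  assumes "\<Q> \<noteq> {}" and "\<And>Q. Q \<in> \<Q> \<Longrightarrow> sets Q = sets M" and "X \<notin> borel_measurable M"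
  shows "(INF Q\<in>\<Q>. ereal (\<integral>x. X x \<partial>Q)) = 0"
proof -
  have "(\<integral>x. X x \<partial>Q) = 0" if "Q \<in> \<Q>" for Q
    using assms(3) measurable_cong_sets[OF assms(2)[OF that] refl]
    by (intro not_integrable_integral_eq) auto
  with assms(1) show ?thesis by simp
qed

lemma integrable_of_L1_set:
  assumes "X \<in> L1_set M \<Q>" and "Q \<in> \<Q>" and "sets Q = sets M"
  shows "integrable Q X"
proof -
  have "(\<integral>\<^sup>+x. ennreal \<bar>X x\<bar> \<partial>Q) \<le> (SUP Q\<in>\<Q>. \<integral>\<^sup>+x. ennreal \<bar>X x\<bar> \<partial>Q)"
    using assms(2) by (rule SUP_upper)
  also have "\<dots> < \<infinity>" using assms(1) by (simp add: L1_set_def)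
  finally show ?thesis
    using assms(1) measurable_cong_sets[OF assms(3) refl] by (auto simp: L1_set_def integrable_iff_bounded)
qed

lemma subset_Qbar:
  assumes Q_prob: "\<And>Q. Q \<in> \<Q> \<Longrightarrow> prob_space Q \<and> sets Q = sets P \<and> absolutely_continuous P Q"
    and Ystar_L1: "Ystar Y T \<in> L1_set P \<Q>"
  shows "\<Q> \<subseteq> Qbar P \<Q> Y T"
proof
  fix Q assume Q: "Q \<in> \<Q>"
  then have prob: "prob_space Q" and sets_Q: "sets Q = sets P" and ac: "absolutely_continuous P Q"
    using Q_prob by auto
  have "integrable Q X" if X_dom: "X \<in> dom_class P Y T" for X
  proof -
    obtain C where X: "X \<in> borel_measurable P" and bound: "AE x in P. \<bar>X x\<bar> \<le> C * (Ystar Y T x + 1)"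
      using X_dom unfolding dom_class_def by blast
    have dominant: "integrable Q (\<lambda>x. C * (Ystar Y T x + 1))"
      using integrable_of_L1_set[OF Ystar_L1 Q sets_Q] prob_space.finite_measure[OF prob]
      by (auto intro!: finite_measure.integrable_const)
    have "AE x in Q. \<bar>X x\<bar> \<le> C * (Ystar Y T x + 1)"
      by (rule absolutely_continuous_AE[OF sets_Q ac bound])
    then show ?thesis
      using X measurable_cong_sets[OF sets_Q refl]
      by (intro Bochner_Integration.integrable_bound[OF dominant]) (auto elim!: AE_mp)
  qed
  moreover have "ereal (\<integral>x. X x \<partial>Q) \<le> rho \<Q> X" for X
    unfolding rho_def using Q by (rule SUP_upper)
  ultimately show "Q \<in> Qbar P \<Q> Y T" using prob sets_Q by (auto simp: Qbar_def)
qed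

lemma integrable_of_Qbar: "Q \<in> Qbar P \<Q> Y T \<Longrightarrow> X \<in> dom_class P Y T \<Longrightarrow> integrable Q X"
  by (simp add: Qbar_def)

lemma abs_le_Ystar:
  assumes "t \<in> {0..T}" and "bounded ((\<lambda>s. Y s \<omega>) ` {0..T})"
  shows "\<bar>Y t \<omega>\<bar> \<le> Ystar Y T \<omega>"
proof -
  obtain B where "\<And>s. s \<in> {0..T} \<Longrightarrow> \<bar>Y s \<omega>\<bar> \<le> B"
    using assms(2) by (fastforce simp: bounded_iff)
  then have "bdd_above ((\<lambda>s. \<bar>Y s \<omega>\<bar>) ` {0..T})"
    by (intro bdd_aboveI2)
  then show ?thesis unfolding Ystar_def using assms(1) by (rule cSUP_upper2) simp
qed

text \<open>If \<open>X\<close> fails to be measurable, its Bochner integral is \<open>0\<close> under every measure, so all three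
  infima vanish; hence no measurability of \<open>Y\<^sub>\<tau>\<close>.\<close>

lemma INF_integral_Qbar_conv_measures:
  fixes X :: "'a \<Rightarrow> real"
  assumes Q_ne: "\<Q> \<noteq> {}"
    and Q_prob: "\<And>Q. Q \<in> \<Q> \<Longrightarrow> prob_space Q \<and> sets Q = sets P \<and> absolutely_continuous P Q"
    and Ystar_L1: "Ystar Y T \<in> L1_set P \<Q>"
    and abs_X: "\<And>\<omega>. \<omega> \<in> space P \<Longrightarrow> \<bar>X \<omega>\<bar> \<le> Ystar Y T \<omega>"
  shows "(INF Q\<in>Qbar P \<Q> Y T. ereal (\<integral>\<omega>. X \<omega> \<partial>Q)) = (INF Q\<in>\<Q>. ereal (\<integral>\<omega>. X \<omega> \<partial>Q))
    \<and> (INF Q\<in>\<Q>. ereal (\<integral>\<omega>. X \<omega> \<partial>Q)) = (INF Q\<in>conv_measures P \<Q>. ereal (\<integral>\<omega>. X \<omega> \<partial>Q))"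
proof -
  have sets_\<Q>: "\<And>Q. Q \<in> \<Q> \<Longrightarrow> sets Q = sets P" using Q_prob by blast
  have Qbar: "\<Q> \<subseteq> Qbar P \<Q> Y T" using Q_prob Ystar_L1 by (rule subset_Qbar)
  have conv: "\<Q> \<subseteq> conv_measures P \<Q>" using sets_\<Q> by (rule subset_conv_measures)
  show ?thesis
  proof (cases "X \<in> borel_measurable P")
    case True
    have "AE \<omega> in P. \<bar>- X \<omega>\<bar> \<le> 1 * (Ystar Y T \<omega> + 1)"
      using abs_X by (intro AE_I2) fastforce
    with True have neg_X: "(\<lambda>\<omega>. - X \<omega>) \<in> dom_class P Y T"
      unfolding dom_class_def by (intro CollectI conjI exI[of _ 1]) auto
    have "integrable Q X" if "Q \<in> \<Q>" for Q
    proof -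
      have "Q \<in> Qbar P \<Q> Y T" using Qbar that ..
      from integrable_minus[OF integrable_of_Qbar[OF this neg_X]] show ?thesis by simp
    qed
    then show ?thesis
      using INF_Qbar_integral[OF Qbar neg_X] INF_conv_measures_integral[OF sets_\<Q> True] by simp
  next
    case False
    have "sets Q = sets P" if "Q \<in> Qbar P \<Q> Y T" for Q
      using that by (simp add: Qbar_def)
    then have "(INF Q\<in>Qbar P \<Q> Y T. ereal (\<integral>\<omega>. X \<omega> \<partial>Q)) = 0"
      using Q_ne Qbar False by (intro INF_integral_not_measurable) auto
    moreover have "(INF Q\<in>\<Q>. ereal (\<integral>\<omega>. X \<omega> \<partial>Q)) = 0"
      using Q_ne sets_\<Q> False by (rule INF_integral_not_measurable)
    moreover have "sets Q = sets P" if "Q \<in> conv_measures P \<Q>" for Q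
      using that by (rule conv_measuresE)
    then have "(INF Q\<in>conv_measures P \<Q>. ereal (\<integral>\<omega>. X \<omega> \<partial>Q)) = 0"
      using Q_ne conv False by (intro INF_integral_not_measurable) auto
    ultimately show ?thesis by simp
  qed
qed

theorem proposition6p2:
  fixes P :: "'a measure" and F :: "real \<Rightarrow> 'a measure" and T :: real
    and \<Q> :: "'a measure set" and Y :: "real \<Rightarrow> 'a \<Rightarrow> real"
  assumes filt: "filtered_prob_space P F T"
    and Q_ne: "\<Q> \<noteq> {}"
    and Q_prob: "\<And>Q. Q \<in> \<Q> \<Longrightarrow> prob_space Q \<and> sets Q = sets P \<and> absolutely_continuous P Q"
    and Y_adapted: "\<And>t. t \<in> {0..T} \<Longrightarrow> Y t \<in> borel_measurable (F t)"
    and Y_rcont: "\<And>\<omega> t. \<omega> \<in> space P \<Longrightarrow> t \<in> {0..<T} \<Longrightarrow> continuous (at_right t) (\<lambda>s. Y s \<omega>)"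
    and Y_bounded: "\<And>\<omega>. \<omega> \<in> space P \<Longrightarrow> bounded ((\<lambda>t. Y t \<omega>) ` {0..T})"
    and Y_qlusc: "quasi_left_usc P F T Y"
    and Ystar_L1: "Ystar Y T \<in> L1_set P \<Q>"
  shows "(SUP \<tau>\<in>stopping_times P F T. INF Q\<in>Qbar P \<Q> Y T. ereal (\<integral>\<omega>. Y (\<tau> \<omega>) \<omega> \<partial>Q))
           = (SUP \<tau>\<in>stopping_times P F T. INF Q\<in>\<Q>. ereal (\<integral>\<omega>. Y (\<tau> \<omega>) \<omega> \<partial>Q))
    \<and> (SUP \<tau>\<in>stopping_times P F T. INF Q\<in>\<Q>. ereal (\<integral>\<omega>. Y (\<tau> \<omega>) \<omega> \<partial>Q))
           = (SUP \<tau>\<in>stopping_times P F T. INF Q\<in>conv_measures P \<Q>. ereal (\<integral>\<omega>. Y (\<tau> \<omega>) \<omega> \<partial>Q))"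
proof -
  have "\<bar>Y (\<tau> \<omega>) \<omega>\<bar> \<le> Ystar Y T \<omega>" if "\<tau> \<in> stopping_times P F T" and "\<omega> \<in> space P" for \<tau> \<omega>
    using that Y_bounded by (intro abs_le_Ystar) (auto simp: stopping_times_def)
  then have "(INF Q\<in>Qbar P \<Q> Y T. ereal (\<integral>\<omega>. Y (\<tau> \<omega>) \<omega> \<partial>Q)) = (INF Q\<in>\<Q>. ereal (\<integral>\<omega>. Y (\<tau> \<omega>) \<omega> \<partial>Q))
    \<and> (INF Q\<in>\<Q>. ereal (\<integral>\<omega>. Y (\<tau> \<omega>) \<omega> \<partial>Q)) = (INF Q\<in>conv_measures P \<Q>. ereal (\<integral>\<omega>. Y (\<tau> \<omega>) \<omega> \<partial>Q))"
    if "\<tau> \<in> stopping_times P F T" for \<tau>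
    using that by (intro INF_integral_Qbar_conv_measures[OF Q_ne Q_prob Ystar_L1])
  then show ?thesis by (auto intro!: SUP_cong)
qed

end
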